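(* Let $(\beta,\gamma)\in[0,\infty)\times[2,\infty)$ and $G\in\mathcal S_{\beta,\gamma}$. Then there exists $C>0$ such that for all $n\ge1$, $$\sup_{t\in[0,T]}\mathbb E_{\nu_b}\Big[\big(\langle\mathcal M^n(G)\rangle_t-\mathbb E_{\nu_b}[\langle\mathcal M^n(G)\rangle_t]\big)^2\Big]\le C,$$ where $\langle\mathcal M^n(G)\rangle_t=\int_0^t\frac{\Theta(n)}{n}\sum_{\{x,y\}\notin\mathcal S}p(x-y)[G(\tfrac yn)-G(\tfrac xn)]^2[\eta^n_s(y)-\eta^n_s(x)]^2ds+\int_0^t\alpha\Theta(n)n^{-1-\beta}\sum_{\{x,y\}\in\mathcal S}p(x-y)[G(\tfrac yn)-G(\tfrac xn)]^2[\eta^n_s(y)-\eta^n_s(x)]^2ds$ (sums over unordered pairs of distinct integers).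
   Context: Fix $\gamma\ge2$, $\alpha>0$, $\beta\ge0$, $b\in(0,1)$, $T>0$. Let $p(0)=0$, $p(x)=c_\gamma|x|^{-\gamma-1}$ ($x\ne0$), $c_\gamma$ normalizing; $m=\sum_{x\ge1}xp(x)$, $\sigma^2=\sum_xx^2p(x)$ when $\gamma>2$, $\kappa_\gamma=c_2$ if $\gamma=2$ and $\sigma^2/2$ if $\gamma>2$, $\hat\alpha=\alpha m/\kappa_\gamma$. Slow bonds $\mathcal S$: unordered pairs $\{x,y\}$ with $x\le-1$, $y\ge0$; rates $r^n_{x,y}=\alpha n^{-\beta}$ on slow bonds, $1$ otherwise. Exclusion process on $\{0,1\}^{\mathbb Z}$ with generator $\mathcal L_nf(\eta)=\sum_{x,y}p(y-x)\eta(x)(1-\eta(y))r^n_{x,y}[f(\eta^{x,y})-f(\eta)]$. $\Theta(n)=n^2$ if $\gamma>2$, $n^2/\log n$ if $\gamma=2$. $\eta^n_t=\eta_{t\Theta(n)}$ started from the Bernoulli product measure $\nu_b$ of density $b$; $\mathbb E_{\nu_b}$ is the corresponding expectation. Test functions: $G=\mathbb 1_{\{u<0\}}G_-+\mathbb 1_{\{u\ge0\}}G_+$ with $G_\pm$ Schwartz; $\mathcal S_{Neu}(\mathbb R^* )$: $G_\pm^{(2k+1)}(0)=0$ for all $k$; $\mathcal S_{Rob}(\mathbb R^* )$: $G_-^{(2k+1)}(0)=G_+^{(2k+1)}(0)=\hat\alpha[G_+^{(2k)}(0)-G_-^{(2k)}(0)]$ for all $k$. $\mathcal S_{\beta,\gamma}$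 is the Schwartz space $\mathcal S(\mathbb R)$ if $\beta<1$, $\mathcal S_{Rob}(\mathbb R^* )$ if $\beta=1,\gamma>2$, $\mathcal S_{Neu}(\mathbb R^* )$ otherwise. *)

theory Defs
  imports "HOL-Probability.Probability"
begin

definition c_gamma :: "real \<Rightarrow> real" where
  "c_gamma \<gamma> = inverse (infsum (\<lambda>h::int. \<bar>real_of_int h\<bar> powr (-\<gamma>-1)) (UNIV - {0}))"

definition pker :: "real \<Rightarrow> int \<Rightarrow> real" where
  "pker \<gamma> h = (if h = 0 then 0 else c_gamma \<gamma> * \<bar>real_of_int h\<bar> powr (-\<gamma>-1))"

definition mean_m :: "real \<Rightarrow> real" where
  "mean_m \<gamma> = infsum (\<lambda>x::int. real_of_int x * pker \<gamma> x) {1..}"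

definition sigma2 :: "real \<Rightarrow> real" where
  "sigma2 \<gamma> = infsum (\<lambda>x::int. (real_of_int x)^2 * pker \<gamma> x) UNIV"

definition kappa :: "real \<Rightarrow> real" where
  "kappa \<gamma> = (if \<gamma> = 2 then c_gamma 2 else sigma2 \<gamma> / 2)"

definition alpha_hat :: "real \<Rightarrow> real \<Rightarrow> real" where
  "alpha_hat \<alpha> \<gamma> = \<alpha> * mean_m \<gamma> / kappa \<gamma>"

definition Theta :: "real \<Rightarrow> nat \<Rightarrow> real" where
  "Theta \<gamma> n = (if \<gamma> > 2 then (real n)^2 else (real n)^2 / ln (real n))"

definition slow :: "int \<Rightarrow> int \<Rightarrow> bool" where
  "slow x y \<longleftrightarrow> (x \<le> -1 \<and> y \<ge> 0) \<or> (y \<le> -1 \<and> x \<ge> 0)"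

definition rate :: "real \<Rightarrow> real \<Rightarrow> nat \<Rightarrow> int \<Rightarrow> int \<Rightarrow> real" where
  "rate \<alpha> \<beta> n x y = (if slow x y then \<alpha> * real n powr (-\<beta>) else 1)"

definition swap_conf :: "(int \<Rightarrow> bool) \<Rightarrow> int \<Rightarrow> int \<Rightarrow> (int \<Rightarrow> bool)" where
  "swap_conf \<eta> x y = (\<lambda>z. if z = x then \<eta> y else if z = y then \<eta> x else \<eta> z)"

definition local_fun :: "((int \<Rightarrow> bool) \<Rightarrow> real) \<Rightarrow> bool" where
  "local_fun f \<longleftrightarrow> (\<exists>A. finite A \<and> (\<forall>\<eta> \<xi>. (\<forall>x\<in>A. \<eta> x = \<xi> x) \<longrightarrow> f \<eta> = f \<xi>))"

definition generator :: "real \<Rightarrow> real \<Rightarrow> real \<Rightarrow> nat \<Rightarrow> ((int \<Rightarrow> bool) \<Rightarrow> real) \<Rightarrow> (int \<Rightarrow> bool) \<Rightarrow> real" where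
  "generator \<alpha> \<beta> \<gamma> n f \<eta> =
     infsum (\<lambda>(x,y). pker \<gamma> (y - x) * of_bool (\<eta> x \<and> \<not> \<eta> y) * rate \<alpha> \<beta> n x y
                        * (f (swap_conf \<eta> x y) - f \<eta>)) UNIV"

definition nat_filtration :: "'w measure \<Rightarrow> ('w \<Rightarrow> real \<Rightarrow> int \<Rightarrow> bool) \<Rightarrow> real \<Rightarrow> 'w measure" where
  "nat_filtration M X s = sigma (space M) {{\<omega> \<in> space M. X \<omega> r x} | r x. 0 \<le> r \<and> r \<le> s}"

text \<open>X is a (cadlag) exclusion process with generator L_n started from the Bernoulli
  product measure of density b: it solves the martingale problem for L_n.\<close>
definition exclusion_process ::
  "real \<Rightarrow> real \<Rightarrow> real \<Rightarrow> real \<Rightarrow> nat \<Rightarrow> 'w measure \<Rightarrow> ('w \<Rightarrow> real \<Rightarrow> int \<Rightarrow> bool) \<Rightarrow> bool" where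
  "exclusion_process \<alpha> \<beta> \<gamma> b n M X \<longleftrightarrow>
     prob_space M
   \<and> (\<forall>t x. (\<lambda>\<omega>. X \<omega> t x) \<in> measurable M (count_space UNIV))
   \<and> (\<forall>x. (\<lambda>(\<omega>, t). X \<omega> t x) \<in> measurable (M \<Otimes>\<^sub>M lborel) (count_space UNIV))
   \<and> (\<forall>\<omega>\<in>space M. \<forall>x. \<forall>t\<ge>0. \<exists>\<delta>>0. \<forall>s\<in>{t..t+\<delta>}. X \<omega> s x = X \<omega> t x)
   \<and> (\<forall>\<omega>\<in>space M. \<forall>x. \<forall>t>0. \<exists>\<delta>>0. \<exists>v. \<forall>s\<in>{t-\<delta><..<t}. X \<omega> s x = v)
   \<and> (\<forall>A \<sigma>. finite A \<longrightarrow>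
        measure M {\<omega> \<in> space M. \<forall>x\<in>A. X \<omega> 0 x = \<sigma> x}
          = b ^ card {x\<in>A. \<sigma> x} * (1 - b) ^ card {x\<in>A. \<not> \<sigma> x})
   \<and> (\<forall>f s t H. local_fun f \<longrightarrow> 0 \<le> s \<longrightarrow> s \<le> t \<longrightarrow>
        H \<in> borel_measurable (nat_filtration M X s) \<longrightarrow>
        (\<exists>B. \<forall>\<omega>\<in>space M. \<bar>H \<omega>\<bar> \<le> B) \<longrightarrow>
        integral\<^sup>L M (\<lambda>\<omega>. (f (X \<omega> t) - f (X \<omega> s)
            - set_lebesgue_integral lborel {s..t} (\<lambda>r. generator \<alpha> \<beta> \<gamma> n f (X \<omega> r))) * H \<omega>) = 0)"

definition schwartz :: "(real \<Rightarrow> real) \<Rightarrow> bool" where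
  "schwartz g \<longleftrightarrow>
     (\<forall>m x. ((deriv ^^ m) g has_real_derivative (deriv ^^ Suc m) g x) (at x))
   \<and> (\<forall>k m. \<exists>B. \<forall>x. \<bar>x ^ k * (deriv ^^ m) g x\<bar> \<le> B)"

definition glue :: "(real \<Rightarrow> real) \<Rightarrow> (real \<Rightarrow> real) \<Rightarrow> real \<Rightarrow> real" where
  "glue Gm Gp u = (if u < 0 then Gm u else Gp u)"

definition S_Neu :: "(real \<Rightarrow> real) \<Rightarrow> (real \<Rightarrow> real) \<Rightarrow> bool" where
  "S_Neu Gm Gp \<longleftrightarrow> schwartz Gm \<and> schwartz Gp \<and>
     (\<forall>k. (deriv ^^ (2*k+1)) Gm 0 = 0 \<and> (deriv ^^ (2*k+1)) Gp 0 = 0)"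

definition S_Rob :: "real \<Rightarrow> (real \<Rightarrow> real) \<Rightarrow> (real \<Rightarrow> real) \<Rightarrow> bool" where
  "S_Rob ah Gm Gp \<longleftrightarrow> schwartz Gm \<and> schwartz Gp \<and>
     (\<forall>k. (deriv ^^ (2*k+1)) Gm 0 = ah * ((deriv ^^ (2*k)) Gp 0 - (deriv ^^ (2*k)) Gm 0)
        \<and> (deriv ^^ (2*k+1)) Gp 0 = ah * ((deriv ^^ (2*k)) Gp 0 - (deriv ^^ (2*k)) Gm 0))"

definition S_beta_gamma :: "real \<Rightarrow> real \<Rightarrow> real \<Rightarrow> (real \<Rightarrow> real) \<Rightarrow> (real \<Rightarrow> real) \<Rightarrow> bool" where
  "S_beta_gamma \<alpha> \<beta> \<gamma> Gm Gp \<longleftrightarrow>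
     (if \<beta> < 1 then schwartz Gm \<and> schwartz Gp \<and> schwartz (glue Gm Gp)
      else if \<beta> = 1 \<and> \<gamma> > 2 then S_Rob (alpha_hat \<alpha> \<gamma>) Gm Gp
      else S_Neu Gm Gp)"

definition qv :: "real \<Rightarrow> real \<Rightarrow> real \<Rightarrow> nat \<Rightarrow> (real \<Rightarrow> real) \<Rightarrow> (real \<Rightarrow> int \<Rightarrow> bool) \<Rightarrow> real \<Rightarrow> real" where
  "qv \<alpha> \<beta> \<gamma> n G eta t =
     set_lebesgue_integral lborel {0..t} (\<lambda>s. Theta \<gamma> n / real n *
        infsum (\<lambda>(x,y). pker \<gamma> (x - y) * (G (real_of_int y / real n) - G (real_of_int x / real n))^2
                          * (of_bool (eta s y) - of_bool (eta s x))^2) {(x,y). x < y \<and> \<not> slow x y})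
   + set_lebesgue_integral lborel {0..t} (\<lambda>s. \<alpha> * Theta \<gamma> n * real n powr (-1 - \<beta>) *
        infsum (\<lambda>(x,y). pker \<gamma> (x - y) * (G (real_of_int y / real n) - G (real_of_int x / real n))^2
                          * (of_bool (eta s y) - of_bool (eta s x))^2) {(x,y). x < y \<and> slow x y})"

end

theory Submission
  imports Defs "HOL-Analysis.Harmonic_Numbers"
begin

text \<open>The quadratic variation is bounded deterministically: for every trajectory and \<open>n \<ge> 1\<close>,
  \<open>|\<langle>M\<^sup>n(G)\<rangle>\<^sub>t| \<le> K t\<close>, so its variance is at most \<open>4(KT)\<^sup>2\<close>. Both integrands are
  scaled Dirichlet energies of \<open>G\<close> at mesh \<open>1/n\<close>. On the fast bonds \<open>G\<close> is smooth on each
  half-line: a bond of length \<open>h \<le> n\<close> contributes \<open>(h/n)\<^sup>2\<close> times a summable weight in \<open>x/n\<close>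
  (mean value theorem), a longer one \<open>O(1)\<close>, and summing against \<open>p(h) \<sim> h\<^sup>-\<^sup>\<gamma>\<^sup>-\<^sup>1\<close> gives
  \<open>O((\<Sum>\<^sub>h\<^sub>\<le>\<^sub>n h\<^sup>1\<^sup>-\<^sup>\<gamma> + 1)/n)\<close>, which \<open>\<Theta>(n)/n\<close> turns into \<open>O(1)\<close>; for \<open>\<gamma> = 2\<close> the
  harmonic sum is absorbed by the \<open>log n\<close> in \<open>\<Theta>(n)\<close>. On the slow bonds either \<open>G\<close> is smooth
  across the origin (\<open>\<beta> < 1\<close>) and the same estimate applies, or (\<open>\<beta> \<ge> 1\<close>) the bounded jump of
  \<open>G\<close> is paid for by the factor \<open>n\<^sup>-\<^sup>\<beta>\<close>, the slow bonds having finite total kernel mass.\<close>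

section \<open>Lattice sums\<close>

text \<open>Telescoping: the term at \<open>\<plusminus>(N+1)\<close> is at most \<open>4n\<^sup>2/(k(k+1))\<close> with \<open>k = n + N + 1\<close>.\<close>
lemma sum_symmetric_inv_one_plus_sq_le:
  fixes n N :: nat assumes "n \<ge> 1"
  shows "(\<Sum>x\<in>{-int N..int N}. 1 / (1 + (real_of_int x / real n)^2))
           \<le> 1 + 8 * real n - 8 * (real n)^2 / (real n + real N + 1)"
proof (induction N)
  case 0
  have "8 * (real n)^2 / (real n + 1) \<le> 8 * real n"
    using assms by (simp add: field_simps power2_eq_square)
  then show ?case by simp
next
  case (Suc N)
  define k where "k = real n + real N + 1"
  have k1: "k \<ge> 1" using assms unfolding k_def by simp
  have term_le: "1 / (1 + (real_of_int (int N + 1) / real n)^2) \<le> 4 * (real n)^2 / (k * (k + 1))"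
  proof -
    have "k * (k + 1) \<le> 2 * k * k" using k1 by (simp add: algebra_simps)
    also have "\<dots> \<le> 4 * ((real n)^2 + (real N + 1)^2)"
      unfolding k_def using sum_squares_ge_zero[of "real n - (real N + 1)" 0]
      by (simp add: power2_eq_square algebra_simps)
    finally have "4 * (real n)^2 / (4 * ((real n)^2 + (real N + 1)^2)) \<le> 4 * (real n)^2 / (k * (k + 1))"
      using k1 by (intro frac_le) auto
    then have "(real n)^2 / ((real n)^2 + (real N + 1)^2) \<le> 4 * (real n)^2 / (k * (k + 1))"
      by (simp only: mult_divide_mult_cancel_left_if) simp
    moreover have "1 / (1 + (real_of_int (int N + 1) / real n)^2) = (real n)^2 / ((real n)^2 + (real N + 1)^2)"
      using assms by (simp add: field_simps)
    ultimately show ?thesis by simp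
  qed
  have "{-int (Suc N)..int (Suc N)} = insert (int N + 1) (insert (-(int N + 1)) {-int N..int N})"
    by auto
  moreover have "(real_of_int (-(int N + 1)) / real n)^2 = (real_of_int (int N + 1) / real n)^2"
    by (simp add: power2_eq_square algebra_simps)
  ultimately have "(\<Sum>x\<in>{-int (Suc N)..int (Suc N)}. 1 / (1 + (real_of_int x / real n)^2))
     = 2 * (1 / (1 + (real_of_int (int N + 1) / real n)^2))
       + (\<Sum>x\<in>{-int N..int N}. 1 / (1 + (real_of_int x / real n)^2))"
    by (simp del: of_int_add of_int_minus)
  also have "\<dots> \<le> 8 * (real n)^2 / (k * (k + 1)) + (1 + 8 * real n - 8 * (real n)^2 / k)"
    using term_le Suc.IH unfolding k_def by simp
  also have "8 * (real n)^2 / (k * (k + 1)) = 8 * (real n)^2 / k - 8 * (real n)^2 / (k + 1)"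
    using k1 by (simp add: field_simps)
  finally show ?case by (simp add: k_def)
qed

lemma finite_int_set_subset_symmetric_interval:
  fixes S :: "int set" assumes "finite S"
  obtains N :: nat where "S \<subseteq> {-int N..int N}"
proof -
  have "bdd_above (abs ` S)" using assms by simp
  then obtain M where "\<forall>x\<in>S. \<bar>x\<bar> \<le> M" by (auto simp: bdd_above_def)
  then have "S \<subseteq> {-int (nat M)..int (nat M)}" by force
  then show ?thesis by (rule that)
qed

lemma sum_inv_one_plus_sq_le:
  fixes n :: nat and S :: "int set" assumes "n \<ge> 1" "finite S"
  shows "(\<Sum>x\<in>S. 1 / (1 + (real_of_int x / real n)^2)) \<le> 9 * real n"
proof -
  obtain N :: nat where N: "S \<subseteq> {-int N..int N}"
    using finite_int_set_subset_symmetric_interval[OF assms(2)] .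
  have "(\<Sum>x\<in>S. 1 / (1 + (real_of_int x / real n)^2))
      \<le> (\<Sum>x\<in>{-int N..int N}. 1 / (1 + (real_of_int x / real n)^2))"
    by (rule sum_mono2) (use N in \<open>auto intro: add_pos_nonneg\<close>)
  also have "\<dots> \<le> 1 + 8 * real n - 8 * (real n)^2 / (real n + real N + 1)"
    by (rule sum_symmetric_inv_one_plus_sq_le[OF assms(1)])
  also have "\<dots> \<le> 9 * real n"
  proof -
    have "real n \<ge> 1" using assms(1) by simp
    moreover have "0 \<le> 8 * (real n)^2 / (real n + real N + 1)" by simp
    ultimately show ?thesis by linarith
  qed
  finally show ?thesis .
qed

lemma sum_inverse_squares_le:
  fixes H :: nat
  shows "(\<Sum>h\<in>{1..H}. 1 / (real h)^2) \<le> 2 - 2 / (real H + 1)"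
proof (induction H)
  case 0 then show ?case by simp
next
  case (Suc H)
  have "1 / (real H + 1)^2 \<le> 2 / (real H + 1) - 2 / (real H + 2)"
    by (simp add: divide_simps power2_eq_square algebra_simps)
  then show ?case using Suc by (simp add: add_ac)
qed

lemma sum_inverse_cubes_tail_le:
  fixes n H :: nat assumes "n \<ge> 1" "n \<le> H"
  shows "(\<Sum>h\<in>{n<..H}. 1 / (real h)^3) \<le> 1 / (real n)^2 - 1 / (real H)^2"
  using assms(2)
proof (induction H rule: dec_induct)
  case base then show ?case by simp
next
  case (step m)
  have m1: "real m \<ge> 1" using step assms by simp
  have "(real m)^2 * (real m + 1)^2 \<le> (2 * real m + 1) * (real m + 1)^3"
    using m1 by (simp add: power2_eq_square power3_eq_cube algebra_simps)
  then have "1 / (real m + 1)^3 \<le> 1 / (real m)^2 - 1 / (real m + 1)^2"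
    using m1 by (simp add: divide_simps) (simp add: algebra_simps power2_eq_square)
  moreover have "{n<..Suc m} = insert (Suc m) {n<..m}" using step by auto
  ultimately show ?case using step.IH by (simp add: add_ac)
qed

lemma sum_powr_tail_le:
  fixes n H :: nat assumes "n \<ge> 1" "\<gamma> \<ge> 2"
  shows "(\<Sum>h\<in>{n<..H}. real h powr (-\<gamma>-1)) \<le> 1 / (real n)^2"
proof -
  have "(\<Sum>h\<in>{n<..H}. real h powr (-\<gamma>-1)) \<le> (\<Sum>h\<in>{n<..H}. 1 / (real h)^3)"
  proof (rule sum_mono)
    fix h assume "h \<in> {n<..H}"
    then have h1: "real h \<ge> 1" using assms by simp
    have "real h powr (-\<gamma>-1) \<le> real h powr (-3)" by (rule powr_mono) (use assms h1 in auto)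
    also have "\<dots> = 1 / (real h)^3" using h1 by (simp add: powr_minus_divide powr_numeral)
    finally show "real h powr (-\<gamma>-1) \<le> 1 / (real h)^3" .
  qed
  also have "\<dots> \<le> 1 / (real n)^2"
  proof (cases "n \<le> H")
    case True
    have "0 \<le> 1 / (real H)^2" by simp
    then show ?thesis using sum_inverse_cubes_tail_le[OF assms(1) True] by linarith
  qed simp
  finally show ?thesis .
qed

lemma sum_powr_kernel_split_le:
  fixes n H :: nat assumes n: "n \<ge> 1" and \<gamma>: "\<gamma> \<ge> 2"
  shows "(\<Sum>h\<in>{1..H}. real h powr (-\<gamma>-1) * (if h \<le> n then (real h)^2 / real n else real n))
           \<le> ((\<Sum>h\<in>{1..n}. real h powr (1-\<gamma>)) + 1) / real n"
proof -
  define q where "q h = real h powr (-\<gamma>-1) * (if h \<le> n then (real h)^2 / real n else real n)" for h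
  have "(\<Sum>h\<in>{1..H}. q h) \<le> (\<Sum>h\<in>{1..max H n}. q h)"
    by (rule sum_mono2) (auto simp: q_def)
  also have "\<dots> = (\<Sum>h\<in>{1..n}. q h) + (\<Sum>h\<in>{n<..max H n}. q h)"
  proof -
    have "{1..max H n} = {1..n} \<union> {n<..max H n}" using n by auto
    then show ?thesis by (simp add: sum.union_disjoint ivl_disj_int)
  qed
  also have "(\<Sum>h\<in>{1..n}. q h) = (\<Sum>h\<in>{1..n}. real h powr (1-\<gamma>)) / real n"
  proof -
    have "q h = real h powr (1-\<gamma>) / real n" if "h \<in> {1..n}" for h
    proof -
      have "(real h)^2 = real h powr 2" using that by (simp add: powr_numeral)
      then have "real h powr (-\<gamma>-1) * (real h)^2 = real h powr (-\<gamma>-1 + 2)"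
        by (simp only: powr_add)
      also have "-\<gamma>-1 + 2 = 1-\<gamma>" by simp
      finally show ?thesis using that by (simp add: q_def)
    qed
    then show ?thesis by (simp add: sum_divide_distrib)
  qed
  also have "(\<Sum>h\<in>{n<..max H n}. q h) = real n * (\<Sum>h\<in>{n<..max H n}. real h powr (-\<gamma>-1))"
    by (simp add: q_def sum_distrib_left mult.commute)
  also have "\<dots> \<le> real n * (1 / (real n)^2)"
    by (intro mult_left_mono sum_powr_tail_le n \<gamma>) simp
  also have "\<dots> = 1 / real n" by (simp add: power2_eq_square)
  finally show ?thesis by (simp add: q_def add_divide_distrib)
qed

lemma Theta_nonneg: "0 \<le> Theta \<gamma> n"
  unfolding Theta_def by (cases "n = 0") auto

lemma Theta_le: assumes "n \<ge> 1" shows "Theta \<gamma> n \<le> 2 * (real n)^2"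
proof (cases "\<gamma> > 2 \<or> n = 1")
  case False
  then have "ln 2 \<le> ln (real n)" using assms by simp
  then have "2/3 \<le> ln (real n)" using ln2_ge_two_thirds by linarith
  then have "(real n)^2 / ln (real n) \<le> (real n)^2 / (2/3)"
    by (intro divide_left_mono) auto
  also have "\<dots> \<le> 2 * (real n)^2" by simp
  finally show ?thesis using False unfolding Theta_def by simp
qed (auto simp: Theta_def)

lemma Theta_mult_sum_powr_le:
  assumes "\<gamma> \<ge> 2"
  obtains K where "\<And>n. n \<ge> 1 \<Longrightarrow> Theta \<gamma> n * ((\<Sum>h\<in>{1..n}. real h powr (1-\<gamma>)) + 1) \<le> K * (real n)^2"
proof (cases "\<gamma> > 2")
  case True
  have "summable (\<lambda>h::nat. real h powr (1-\<gamma>))" using True by (subst summable_real_powr_iff) simp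
  then have "(\<Sum>h\<in>{1..n}. real h powr (1-\<gamma>)) \<le> (\<Sum>h. real h powr (1-\<gamma>))" for n
    by (rule sum_le_suminf) auto
  then show ?thesis
    using True by (intro that[of "(\<Sum>h. real h powr (1-\<gamma>)) + 1"]) (simp add: Theta_def mult.commute)
next
  case False
  then have \<gamma>: "\<gamma> = 2" using assms by simp
  have "Theta \<gamma> n * ((\<Sum>h\<in>{1..n}. real h powr (1-\<gamma>)) + 1) \<le> 5 * (real n)^2" if n: "n \<ge> 1" for n
  proof (cases "n = 1")
    case False
    then have "ln 2 \<le> ln (real n)" using n by simp
    then have ln_n: "2/3 \<le> ln (real n)" using ln2_ge_two_thirds by linarith
    have "(\<Sum>h\<in>{1..n}. real h powr (1-\<gamma>)) = harm n"
      unfolding harm_def \<gamma> by (intro sum.cong) (auto simp: powr_minus_divide divide_inverse)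
    also have "harm n \<le> 1 + ln (real n)"
      using euler_mascheroni_sequence_decreasing[of 1 n] n by (simp add: harm_def)
    finally have harm_le: "(\<Sum>h\<in>{1..n}. real h powr (1-\<gamma>)) + 1 \<le> 2 + ln (real n)" by simp
    have "Theta \<gamma> n = (real n)^2 / ln (real n)" using \<gamma> by (simp add: Theta_def)
    then have "Theta \<gamma> n * ((\<Sum>h\<in>{1..n}. real h powr (1-\<gamma>)) + 1)
        \<le> (real n)^2 / ln (real n) * (2 + ln (real n))"
      using harm_le ln_n by (simp only:) (rule mult_left_mono, auto)
    also have "\<dots> = 2 * ((real n)^2 / ln (real n)) + (real n)^2"
      using ln_n by (simp add: field_simps)
    also have "(real n)^2 / ln (real n) \<le> (real n)^2 / (2/3)"
      using ln_n by (intro divide_left_mono) auto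
    also have "\<dots> \<le> 2 * (real n)^2" by simp
    finally show ?thesis by simp
  qed (simp add: Theta_def \<gamma>)
  then show ?thesis by (rule that)
qed

section \<open>Schwartz functions on the lattice\<close>

lemma decay_of_moment_bounds:
  fixes f :: "real \<Rightarrow> real"
  assumes "\<And>x. \<bar>f x\<bar> \<le> B\<^sub>0" "\<And>x. \<bar>x^2 * f x\<bar> \<le> B\<^sub>2"
  shows "\<bar>f u\<bar> \<le> (B\<^sub>0 + B\<^sub>2) / (1 + u^2)"
proof -
  have "\<bar>f u\<bar> * (1 + u^2) = \<bar>f u\<bar> + \<bar>u^2 * f u\<bar>" by (simp add: algebra_simps abs_mult)
  also have "\<dots> \<le> B\<^sub>0 + B\<^sub>2" using assms[of u] by simp
  finally show ?thesis by (simp add: field_simps add_pos_nonneg)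
qed

lemma schwartz_deriv_decay:
  assumes "schwartz g"
  obtains D where "\<And>u. \<bar>(deriv ^^ m) g u\<bar> \<le> D / (1 + u^2)"
proof -
  obtain B\<^sub>0 B\<^sub>2 where "\<And>x. \<bar>x ^ 0 * (deriv ^^ m) g x\<bar> \<le> B\<^sub>0" "\<And>x. \<bar>x ^ 2 * (deriv ^^ m) g x\<bar> \<le> B\<^sub>2"
    using assms unfolding schwartz_def by metis
  then show ?thesis by (intro that[of "B\<^sub>0 + B\<^sub>2"] decay_of_moment_bounds) auto
qed

lemma schwartz_has_real_derivative:
  assumes "schwartz g" shows "(g has_real_derivative deriv g u) (at u)"
proof -
  have "((deriv ^^ 0) g has_real_derivative (deriv ^^ Suc 0) g u) (at u)"
    using assms unfolding schwartz_def by blast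
  then show ?thesis by simp
qed

lemma schwartz_bounded:
  assumes "schwartz g" obtains B where "\<And>u. \<bar>g u\<bar> \<le> B"
  using assms unfolding schwartz_def by (metis funpow_0 mult_1 power_0)

lemma sq_increment_le_of_deriv_decay:
  fixes g :: "real \<Rightarrow> real"
  assumes der: "\<And>u. (g has_real_derivative deriv g u) (at u)"
    and decay: "\<And>u. \<bar>deriv g u\<bar> \<le> L / (1 + u^2)"
    and "a < b" "b - a \<le> 1"
  shows "(g b - g a)^2 \<le> 9 * L^2 * (b - a)^2 / (1 + a^2)"
proof -
  obtain z where z: "a < z" "z < b" "g b - g a = (b - a) * deriv g z"
    using MVT2[OF \<open>a < b\<close>, of g "deriv g"] der by blast
  have L: "0 \<le> L" using decay[of 0] abs_ge_zero[of "deriv g 0"] by simp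
  have "\<bar>a\<bar> \<le> \<bar>z\<bar> + 1" using z assms(4) by auto
  then have "a^2 \<le> (\<bar>z\<bar> + 1)^2"
    using power_mono[of "\<bar>a\<bar>" "\<bar>z\<bar> + 1" 2] by simp
  also have "\<dots> \<le> 2 * z^2 + 2"
    using sum_squares_ge_zero[of "\<bar>z\<bar> - 1" 0] by (simp add: power2_eq_square algebra_simps)
  finally have "1 + a^2 \<le> 3 * (1 + z^2)" by (smt (verit) zero_le_power2)
  then have "3 * L / (3 * (1 + z^2)) \<le> 3 * L / (1 + a^2)"
    using L by (intro divide_left_mono) (auto intro!: mult_pos_pos add_pos_nonneg)
  then have "L / (1 + z^2) \<le> 3 * L / (1 + a^2)"
    by (simp only: mult_divide_mult_cancel_left_if) simp
  then have "\<bar>deriv g z\<bar> \<le> 3 * L / (1 + a^2)" using decay[of z] by linarith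
  then have "(deriv g z)^2 \<le> (3 * L / (1 + a^2))^2"
    using power_mono[of "\<bar>deriv g z\<bar>" _ 2] by simp
  also have "\<dots> = 9 * L^2 / (1 + a^2) * (1 / (1 + a^2))" by (simp add: power2_eq_square)
  also have "\<dots> \<le> 9 * L^2 / (1 + a^2)"
    using L by (intro mult_left_le) (simp_all add: add_pos_nonneg)
  finally have "(b - a)^2 * (deriv g z)^2 \<le> (b - a)^2 * (9 * L^2 / (1 + a^2))"
    by (intro mult_left_mono) auto
  then show ?thesis using z by (simp add: power_mult_distrib mult_ac)
qed

lemma sum_sq_increment_le_near:
  fixes g :: "real \<Rightarrow> real" and n h :: nat and S :: "int set"
  assumes der: "\<And>u. (g has_real_derivative deriv g u) (at u)"
    and decay: "\<And>u. \<bar>deriv g u\<bar> \<le> L / (1 + u^2)"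
    and "n \<ge> 1" "1 \<le> h" "h \<le> n" "finite S"
  shows "(\<Sum>x\<in>S. (g ((real_of_int x + real h) / real n) - g (real_of_int x / real n))^2)
           \<le> 81 * L^2 * (real h)^2 / real n"
proof -
  have "(g ((real_of_int x + real h) / real n) - g (real_of_int x / real n))^2
        \<le> 9 * L^2 * (real h / real n)^2 * (1 / (1 + (real_of_int x / real n)^2))" for x
  proof -
    have "(real_of_int x + real h) / real n - real_of_int x / real n = real h / real n"
      by (simp add: add_divide_distrib)
    moreover have "0 < real h / real n" "real h / real n \<le> 1" using assms(3-5) by auto
    ultimately show ?thesis
      using sq_increment_le_of_deriv_decay[OF der decay,
          of "real_of_int x / real n" "(real_of_int x + real h) / real n"]
      by simp
  qed
  then have "(\<Sum>x\<in>S. (g ((real_of_int x + real h) / real n) - g (real_of_int x / real n))^2)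
      \<le> 9 * L^2 * (real h / real n)^2 * (\<Sum>x\<in>S. 1 / (1 + (real_of_int x / real n)^2))"
    by (simp add: sum_distrib_left sum_mono)
  also have "\<dots> \<le> 9 * L^2 * (real h / real n)^2 * (9 * real n)"
    by (intro mult_left_mono sum_inv_one_plus_sq_le assms) simp
  also have "\<dots> = 81 * L^2 * (real h)^2 / real n"
    using assms(3) by (simp add: power2_eq_square field_simps)
  finally show ?thesis .
qed

lemma sum_sq_increment_le_far:
  fixes g :: "real \<Rightarrow> real" and n h :: nat and S :: "int set"
  assumes decay: "\<And>u. \<bar>g u\<bar> \<le> D / (1 + u^2)" and "n \<ge> 1" "finite S"
  shows "(\<Sum>x\<in>S. (g ((real_of_int x + real h) / real n) - g (real_of_int x / real n))^2) \<le> 36 * D^2 * real n"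
proof -
  have D: "0 \<le> D" using decay[of 0] abs_ge_zero[of "g 0"] by simp
  have sq: "(g u)^2 \<le> D^2 * (1 / (1 + u^2))" for u
  proof -
    have "\<bar>g u\<bar> \<le> D" using decay[of u] D by (smt (verit) divide_le_eq zero_le_power2 mult_le_cancel_left1)
    then have "\<bar>g u\<bar> * \<bar>g u\<bar> \<le> D * (D / (1 + u^2))"
      using decay[of u] D by (intro mult_mono) auto
    then show ?thesis by (simp add: power2_eq_square)
  qed
  have "(g ((real_of_int x + real h) / real n) - g (real_of_int x / real n))^2
        \<le> 2 * D^2 * (1 / (1 + (real_of_int (x + int h) / real n)^2)) + 2 * D^2 * (1 / (1 + (real_of_int x / real n)^2))" for x
  proof -
    have "(g ((real_of_int x + real h) / real n) - g (real_of_int x / real n))^2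
       \<le> 2 * (g ((real_of_int x + real h) / real n))^2 + 2 * (g (real_of_int x / real n))^2"
      using sum_squares_ge_zero[of "g ((real_of_int x + real h) / real n) + g (real_of_int x / real n)" 0]
      by (simp add: power2_eq_square algebra_simps)
    then show ?thesis
      using sq[of "(real_of_int x + real h) / real n"] sq[of "real_of_int x / real n"] by simp
  qed
  then have "(\<Sum>x\<in>S. (g ((real_of_int x + real h) / real n) - g (real_of_int x / real n))^2)
      \<le> (\<Sum>x\<in>S. 2 * D^2 * (1 / (1 + (real_of_int (x + int h) / real n)^2))
        + 2 * D^2 * (1 / (1 + (real_of_int x / real n)^2)))"
    by (rule sum_mono)
  also have "\<dots> = 2 * D^2 * (\<Sum>x\<in>S. 1 / (1 + (real_of_int (x + int h) / real n)^2))
        + 2 * D^2 * (\<Sum>x\<in>S. 1 / (1 + (real_of_int x / real n)^2))"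
    by (simp only: sum.distrib sum_distrib_left)
  also have "(\<Sum>x\<in>S. 1 / (1 + (real_of_int (x + int h) / real n)^2))
      = (\<Sum>x\<in>(\<lambda>x. x + int h) ` S. 1 / (1 + (real_of_int x / real n)^2))"
    by (rule sum.reindex_cong[symmetric]) (auto simp: inj_on_def)
  also have "2 * D^2 * \<dots> + 2 * D^2 * (\<Sum>x\<in>S. 1 / (1 + (real_of_int x / real n)^2))
      \<le> 2 * D^2 * (9 * real n) + 2 * D^2 * (9 * real n)"
    by (intro add_mono mult_left_mono sum_inv_one_plus_sq_le finite_imageI assms) auto
  finally show ?thesis by (simp add: mult_ac)
qed

section \<open>Energy of the fast bonds\<close>

definition bond_energy :: "real \<Rightarrow> nat \<Rightarrow> (real \<Rightarrow> real) \<Rightarrow> int \<times> int \<Rightarrow> real" where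
  "bond_energy \<gamma> n G = (\<lambda>(x, y). pker \<gamma> (x - y) * (G (real_of_int y / real n) - G (real_of_int x / real n))^2)"

lemma c_gamma_nonneg: "0 \<le> c_gamma \<gamma>"
  unfolding c_gamma_def by (simp add: infsum_nonneg)

lemma pker_nonneg: "0 \<le> pker \<gamma> h"
  unfolding pker_def using c_gamma_nonneg by simp

lemma pker_uminus_of_nat: "h \<ge> 1 \<Longrightarrow> pker \<gamma> (- int h) = c_gamma \<gamma> * real h powr (-\<gamma>-1)"
  unfolding pker_def by simp

lemma bond_energy_nonneg: "0 \<le> bond_energy \<gamma> n G p"
  unfolding bond_energy_def by (auto simp: pker_nonneg split: prod.splits)

lemma finite_pairs_subset_symmetric_square:
  fixes F :: "(int \<times> int) set" assumes "finite F"
  obtains N :: nat where "F \<subseteq> {-int N..int N} \<times> {-int N..int N}"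
proof -
  obtain N :: nat where "fst ` F \<union> snd ` F \<subseteq> {-int N..int N}"
    using finite_int_set_subset_symmetric_interval[of "fst ` F \<union> snd ` F"] assms by blast
  then have "F \<subseteq> {-int N..int N} \<times> {-int N..int N}" using subset_fst_snd[of F] by blast
  then show ?thesis by (rule that)
qed

lemma sum_bond_energy_le_row_sums:
  fixes F :: "(int \<times> int) set"
  assumes "finite F" "F \<subseteq> {(x, y). x < y}"
    and rows: "\<And>h S. h \<ge> 1 \<Longrightarrow> finite S \<Longrightarrow>
      (\<Sum>x\<in>S. (g ((real_of_int x + real h) / real n) - g (real_of_int x / real n))^2) \<le> r h"
  obtains H where "sum (bond_energy \<gamma> n g) F \<le> c_gamma \<gamma> * (\<Sum>h\<in>{1..H}. real h powr (-\<gamma>-1) * r h)"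
proof -
  obtain N :: nat where N: "F \<subseteq> {-int N..int N} \<times> {-int N..int N}"
    using finite_pairs_subset_symmetric_square[OF assms(1)] .
  define \<phi> where "\<phi> = (\<lambda>(h::nat, x::int). (x, x + int h))"
  define A where "A = {1..2*N} \<times> {-int N..int N}"
  have F_covered: "F \<subseteq> \<phi> ` A"
  proof
    fix p assume p: "p \<in> F"
    obtain x y where xy: "p = (x, y)" by (cases p)
    then have "x < y" "\<bar>x\<bar> \<le> int N" "\<bar>y\<bar> \<le> int N" using p assms(2) N by (auto simp: abs_le_iff)
    with xy have "(nat (y - x), x) \<in> A" "p = \<phi> (nat (y - x), x)" unfolding A_def \<phi>_def by auto
    then show "p \<in> \<phi> ` A" by blast
  qed
  have "sum (bond_energy \<gamma> n g) F \<le> sum (bond_energy \<gamma> n g) (\<phi> ` A)"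
    by (rule sum_mono2[OF _ F_covered]) (auto simp: A_def bond_energy_nonneg)
  also have "\<dots> = sum (bond_energy \<gamma> n g \<circ> \<phi>) A"
    by (rule sum.reindex) (auto simp: inj_on_def \<phi>_def)
  also have "\<dots> = (\<Sum>h\<in>{1..2*N}. \<Sum>x\<in>{-int N..int N}. bond_energy \<gamma> n g (\<phi> (h, x)))"
    by (simp add: A_def sum.cartesian_product case_prod_unfold)
  also have "\<dots> = (\<Sum>h\<in>{1..2*N}. pker \<gamma> (- int h) *
      (\<Sum>x\<in>{-int N..int N}. (g ((real_of_int x + real h) / real n) - g (real_of_int x / real n))^2))"
    by (simp add: bond_energy_def \<phi>_def sum_distrib_left)
  also have "\<dots> \<le> (\<Sum>h\<in>{1..2*N}. pker \<gamma> (- int h) * r h)"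
    by (intro sum_mono mult_left_mono rows) (auto simp: pker_nonneg)
  also have "\<dots> = (\<Sum>h\<in>{1..2*N}. c_gamma \<gamma> * real h powr (-\<gamma>-1) * r h)"
    by (intro sum.cong) (auto simp: pker_uminus_of_nat)
  finally show ?thesis by (intro that) (simp add: sum_distrib_left mult.assoc)
qed

lemma Theta_sum_bond_energy_le:
  assumes "schwartz g" "\<gamma> \<ge> 2"
  obtains K where "\<And>n F. n \<ge> 1 \<Longrightarrow> finite F \<Longrightarrow> F \<subseteq> {(x, y). x < y} \<Longrightarrow>
    Theta \<gamma> n * sum (bond_energy \<gamma> n g) F \<le> K * real n"
proof -
  obtain D where D: "\<And>u. \<bar>(deriv ^^ 0) g u\<bar> \<le> D / (1 + u^2)"
    using schwartz_deriv_decay[OF assms(1)] by metis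
  obtain L where L: "\<And>u. \<bar>(deriv ^^ 1) g u\<bar> \<le> L / (1 + u^2)"
    using schwartz_deriv_decay[OF assms(1)] by metis
  obtain K where K: "\<And>n. n \<ge> 1 \<Longrightarrow> Theta \<gamma> n * ((\<Sum>h\<in>{1..n}. real h powr (1-\<gamma>)) + 1) \<le> K * (real n)^2"
    using Theta_mult_sum_powr_le[OF assms(2)] by metis
  define R where "R = 81 * L^2 + 36 * D^2"
  define c where "c = c_gamma \<gamma>"
  have "Theta \<gamma> n * sum (bond_energy \<gamma> n g) F \<le> (c * R * K) * real n"
    if n: "n \<ge> 1" and F: "finite F" "F \<subseteq> {(x, y). x < y}" for n F
  proof -
    define r where "r h = R * (if h \<le> n then (real h)^2 / real n else real n)" for h
    have rows: "(\<Sum>x\<in>S. (g ((real_of_int x + real h) / real n) - g (real_of_int x / real n))^2) \<le> r h"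
      if "h \<ge> 1" "finite S" for h S
    proof (cases "h \<le> n")
      case True
      then have "(\<Sum>x\<in>S. (g ((real_of_int x + real h) / real n) - g (real_of_int x / real n))^2)
          \<le> 81 * L^2 * (real h)^2 / real n"
        using sum_sq_increment_le_near[of g L n h S] L schwartz_has_real_derivative[OF assms(1)] n that
        by simp
      also have "\<dots> \<le> r h" using True by (simp add: r_def R_def divide_right_mono distrib_right)
      finally show ?thesis .
    next
      case False
      then have "(\<Sum>x\<in>S. (g ((real_of_int x + real h) / real n) - g (real_of_int x / real n))^2)
          \<le> 36 * D^2 * real n"
        using sum_sq_increment_le_far[of g D n S h] D n that by simp
      also have "\<dots> \<le> r h" using False by (simp add: r_def R_def distrib_right)
      finally show ?thesis .
    qed
    obtain H where "sum (bond_energy \<gamma> n g) F \<le> c * (\<Sum>h\<in>{1..H}. real h powr (-\<gamma>-1) * r h)"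
      using sum_bond_energy_le_row_sums[OF F rows] unfolding c_def by metis
    also have "\<dots> = c * R * (\<Sum>h\<in>{1..H}. real h powr (-\<gamma>-1) *
        (if h \<le> n then (real h)^2 / real n else real n))"
      by (simp add: r_def sum_distrib_left mult_ac)
    also have "\<dots> \<le> c * R * (((\<Sum>h\<in>{1..n}. real h powr (1-\<gamma>)) + 1) / real n)"
      by (intro mult_left_mono sum_powr_kernel_split_le n assms(2))
        (simp add: c_def R_def c_gamma_nonneg)
    finally have "Theta \<gamma> n * sum (bond_energy \<gamma> n g) F
        \<le> Theta \<gamma> n * (c * R * (((\<Sum>h\<in>{1..n}. real h powr (1-\<gamma>)) + 1) / real n))"
      by (rule mult_left_mono[OF _ Theta_nonneg])
    also have "\<dots> = c * R / real n * (Theta \<gamma> n * ((\<Sum>h\<in>{1..n}. real h powr (1-\<gamma>)) + 1))"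
      by simp
    also have "\<dots> \<le> c * R / real n * (K * (real n)^2)"
      by (intro mult_left_mono K n) (simp add: c_def R_def c_gamma_nonneg)
    finally show ?thesis using n by (simp add: power2_eq_square)
  qed
  then show ?thesis by (rule that)
qed

section \<open>Energy of the slow bonds\<close>

lemma powr_le_one_of_nonpos: "1 \<le> x \<Longrightarrow> a \<le> 0 \<Longrightarrow> x powr a \<le> (1::real)"
  using powr_mono[of a 0 x] by simp

text \<open>The slow bonds of length \<open>h\<close> are the \<open>h\<close> bonds crossing the origin, so their kernel mass
  is \<open>\<Sum>\<^sub>h h p(h) \<le> c\<^sub>\<gamma> \<Sum>\<^sub>h h\<^sup>-\<^sup>2\<close>.\<close>
lemma sum_pker_slow_le:
  fixes F :: "(int \<times> int) set"
  assumes "\<gamma> \<ge> 2" "finite F" "F \<subseteq> {(x, y). x < y \<and> slow x y}"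
  shows "(\<Sum>(x, y)\<in>F. pker \<gamma> (x - y)) \<le> 2 * c_gamma \<gamma>"
proof -
  define P where "P = (\<lambda>(x::int, y::int). pker \<gamma> (x - y))"
  obtain N :: nat where N: "F \<subseteq> {-int N..int N} \<times> {-int N..int N}"
    using finite_pairs_subset_symmetric_square[OF assms(2)] .
  define \<psi> where "\<psi> = (\<lambda>(h::nat, k::nat). (- int k, int h - int k))"
  define A where "A = (SIGMA h:{1..2*N}. {1..h})"
  have F_covered: "F \<subseteq> \<psi> ` A"
  proof
    fix p assume p: "p \<in> F"
    obtain x y where xy: "p = (x, y)" by (cases p)
    then have "x \<le> -1" "y \<ge> 0" "\<bar>x\<bar> \<le> int N" "\<bar>y\<bar> \<le> int N"
      using p assms(3) N by (auto simp: slow_def abs_le_iff)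
    with xy have "(nat (y - x), nat (-x)) \<in> A" "p = \<psi> (nat (y - x), nat (-x))"
      unfolding A_def \<psi>_def by auto
    then show "p \<in> \<psi> ` A" by blast
  qed
  have "sum P F \<le> sum P (\<psi> ` A)"
    by (rule sum_mono2[OF _ F_covered]) (auto simp: A_def P_def pker_nonneg)
  also have "\<dots> = sum (P \<circ> \<psi>) A"
    by (rule sum.reindex) (auto simp: inj_on_def \<psi>_def)
  also have "\<dots> = (\<Sum>h\<in>{1..2*N}. \<Sum>k\<in>{1..h}. P (\<psi> (h, k)))"
    unfolding A_def by (subst sum.Sigma) auto
  also have "\<dots> = (\<Sum>h\<in>{1..2*N}. c_gamma \<gamma> * (real h * real h powr (-\<gamma>-1)))"
    by (intro sum.cong) (auto simp: P_def \<psi>_def pker_uminus_of_nat)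
  also have "\<dots> \<le> (\<Sum>h\<in>{1..2*N}. c_gamma \<gamma> * (1 / (real h)^2))"
  proof (intro sum_mono mult_left_mono c_gamma_nonneg)
    fix h assume "h \<in> {1..2*N}"
    then have h: "real h \<ge> 1" by simp
    have "real h * real h powr (-\<gamma>-1) = real h powr (-\<gamma>)"
      using h powr_add[of "real h" 1 "-\<gamma>-1"] by simp
    also have "\<dots> \<le> real h powr (-2)" by (rule powr_mono) (use assms(1) h in auto)
    also have "\<dots> = 1 / (real h)^2" using h by (simp add: powr_minus_divide powr_numeral)
    finally show "real h * real h powr (-\<gamma>-1) \<le> 1 / (real h)^2" .
  qed
  also have "\<dots> = c_gamma \<gamma> * (\<Sum>h\<in>{1..2*N}. 1 / (real h)^2)"
    by (simp add: sum_distrib_left)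
  also have "\<dots> \<le> c_gamma \<gamma> * 2"
    using sum_inverse_squares_le[of "2*N"] divide_nonneg_nonneg[of 2 "real (2*N) + 1"]
    by (intro mult_left_mono c_gamma_nonneg) linarith
  finally show ?thesis by (simp add: P_def mult.commute)
qed

lemma sum_bond_energy_slow_le:
  fixes F :: "(int \<times> int) set"
  assumes "\<And>u. \<bar>G u\<bar> \<le> B" "\<gamma> \<ge> 2" "finite F" "F \<subseteq> {(x, y). x < y \<and> slow x y}"
  shows "sum (bond_energy \<gamma> n G) F \<le> 8 * c_gamma \<gamma> * B^2"
proof -
  have "(G v - G u)^2 \<le> 4 * B^2" for u v
  proof -
    have "\<bar>G v - G u\<bar> \<le> 2 * B" using assms(1)[of u] assms(1)[of v] by linarith
    then have "\<bar>G v - G u\<bar>^2 \<le> (2 * B)^2" by (intro power_mono) auto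
    then show ?thesis by (simp add: power_mult_distrib)
  qed
  then have "sum (bond_energy \<gamma> n G) F \<le> (\<Sum>(x, y)\<in>F. pker \<gamma> (x - y) * (4 * B^2))"
    by (intro sum_mono) (auto simp: bond_energy_def pker_nonneg mult_left_mono)
  also have "\<dots> = (\<Sum>(x, y)\<in>F. pker \<gamma> (x - y)) * (4 * B^2)"
    by (simp add: sum_distrib_right case_prod_unfold)
  also have "\<dots> \<le> 2 * c_gamma \<gamma> * (4 * B^2)"
    by (intro mult_right_mono sum_pker_slow_le assms(2-4)) simp
  finally show ?thesis by simp
qed

lemma bond_energy_glue_le:
  assumes "x < y" "\<not> slow x y" "n \<ge> 1"
  shows "bond_energy \<gamma> n (glue Gm Gp) (x, y) \<le> bond_energy \<gamma> n Gm (x, y) + bond_energy \<gamma> n Gp (x, y)"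
proof -
  have "y < 0 \<or> 0 \<le> x" using assms(1,2) unfolding slow_def by auto
  then have "real_of_int x / real n < 0 \<and> real_of_int y / real n < 0
      \<or> \<not> real_of_int x / real n < 0 \<and> \<not> real_of_int y / real n < 0"
    using assms(1,3) by (auto simp: divide_neg_pos not_less)
  then have "bond_energy \<gamma> n (glue Gm Gp) (x, y) = bond_energy \<gamma> n Gm (x, y)
      \<or> bond_energy \<gamma> n (glue Gm Gp) (x, y) = bond_energy \<gamma> n Gp (x, y)"
    by (auto simp: bond_energy_def glue_def)
  then show ?thesis using bond_energy_nonneg[of \<gamma> n Gm] bond_energy_nonneg[of \<gamma> n Gp] by auto
qed

lemma fast_bonds_bounded:
  assumes "schwartz Gm" "schwartz Gp" "\<gamma> \<ge> 2"
  obtains K where "\<And>n F. n \<ge> 1 \<Longrightarrow> finite F \<Longrightarrow> F \<subseteq> {(x, y). x < y \<and> \<not> slow x y} \<Longrightarrow>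
    Theta \<gamma> n / real n * sum (bond_energy \<gamma> n (glue Gm Gp)) F \<le> K"
proof -
  obtain Km where Km: "\<And>n F. n \<ge> 1 \<Longrightarrow> finite F \<Longrightarrow> F \<subseteq> {(x, y). x < y} \<Longrightarrow>
      Theta \<gamma> n * sum (bond_energy \<gamma> n Gm) F \<le> Km * real n"
    using Theta_sum_bond_energy_le[OF assms(1,3)] by metis
  obtain Kp where Kp: "\<And>n F. n \<ge> 1 \<Longrightarrow> finite F \<Longrightarrow> F \<subseteq> {(x, y). x < y} \<Longrightarrow>
      Theta \<gamma> n * sum (bond_energy \<gamma> n Gp) F \<le> Kp * real n"
    using Theta_sum_bond_energy_le[OF assms(2,3)] by metis
  have "Theta \<gamma> n / real n * sum (bond_energy \<gamma> n (glue Gm Gp)) F \<le> Km + Kp"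
    if n: "n \<ge> 1" and F: "finite F" "F \<subseteq> {(x, y). x < y \<and> \<not> slow x y}" for n F
  proof -
    have F': "F \<subseteq> {(x, y). x < y}" using F(2) by auto
    have "sum (bond_energy \<gamma> n (glue Gm Gp)) F \<le> sum (bond_energy \<gamma> n Gm) F + sum (bond_energy \<gamma> n Gp) F"
      unfolding sum.distrib[symmetric] using F(2) n by (intro sum_mono) (auto intro: bond_energy_glue_le)
    then have "Theta \<gamma> n * sum (bond_energy \<gamma> n (glue Gm Gp)) F
        \<le> Theta \<gamma> n * sum (bond_energy \<gamma> n Gm) F + Theta \<gamma> n * sum (bond_energy \<gamma> n Gp) F"
      using Theta_nonneg[of \<gamma> n] by (simp add: mult_left_mono flip: distrib_left)
    also have "\<dots> \<le> (Km + Kp) * real n"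
      using Km[OF n F(1) F'] Kp[OF n F(1) F'] by (simp add: distrib_right)
    finally show ?thesis using n by (simp add: divide_simps mult.commute)
  qed
  then show ?thesis by (rule that)
qed

lemma slow_bonds_bounded_of_schwartz:
  assumes "schwartz (glue Gm Gp)" "\<gamma> \<ge> 2" "\<alpha> > 0" "\<beta> \<ge> 0"
  obtains K where "\<And>n F. n \<ge> 1 \<Longrightarrow> finite F \<Longrightarrow> F \<subseteq> {(x, y). x < y \<and> slow x y} \<Longrightarrow>
    \<alpha> * Theta \<gamma> n * real n powr (-1-\<beta>) * sum (bond_energy \<gamma> n (glue Gm Gp)) F \<le> K"
proof -
  obtain K where K: "\<And>n F. n \<ge> 1 \<Longrightarrow> finite F \<Longrightarrow> F \<subseteq> {(x, y). x < y} \<Longrightarrow>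
      Theta \<gamma> n * sum (bond_energy \<gamma> n (glue Gm Gp)) F \<le> K * real n"
    using Theta_sum_bond_energy_le[OF assms(1,2)] by metis
  have "\<alpha> * Theta \<gamma> n * real n powr (-1-\<beta>) * sum (bond_energy \<gamma> n (glue Gm Gp)) F \<le> \<alpha> * \<bar>K\<bar>"
    if n: "n \<ge> 1" and F: "finite F" "F \<subseteq> {(x, y). x < y \<and> slow x y}" for n F
  proof -
    have "\<alpha> * Theta \<gamma> n * real n powr (-1-\<beta>) * sum (bond_energy \<gamma> n (glue Gm Gp)) F
        = \<alpha> * real n powr (-1-\<beta>) * (Theta \<gamma> n * sum (bond_energy \<gamma> n (glue Gm Gp)) F)"
      by (simp add: mult_ac)
    also have "\<dots> \<le> \<alpha> * real n powr (-1-\<beta>) * (K * real n)"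
      using K[OF n F(1)] F(2) assms(3) by (intro mult_left_mono) auto
    also have "\<dots> = \<alpha> * K * real n powr (-\<beta>)"
      using n by (simp add: powr_diff powr_minus_divide)
    also have "\<dots> \<le> \<alpha> * (\<bar>K\<bar> * real n powr (-\<beta>))"
      using assms(3) by (simp add: mult.assoc mult_right_mono)
    also have "\<dots> \<le> \<alpha> * \<bar>K\<bar>"
      using n assms(3,4) powr_le_one_of_nonpos[of "real n" "-\<beta>"] by (simp add: mult_left_le)
    finally show ?thesis .
  qed
  then show ?thesis by (rule that)
qed

lemma slow_bonds_bounded_of_bounded:
  assumes "\<And>u. \<bar>glue Gm Gp u\<bar> \<le> B" "\<gamma> \<ge> 2" "\<alpha> > 0" "\<beta> \<ge> 1"
  obtains K where "\<And>n F. n \<ge> 1 \<Longrightarrow> finite F \<Longrightarrow> F \<subseteq> {(x, y). x < y \<and> slow x y} \<Longrightarrow>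
    \<alpha> * Theta \<gamma> n * real n powr (-1-\<beta>) * sum (bond_energy \<gamma> n (glue Gm Gp)) F \<le> K"
proof -
  have "\<alpha> * Theta \<gamma> n * real n powr (-1-\<beta>) * sum (bond_energy \<gamma> n (glue Gm Gp)) F
      \<le> \<alpha> * 2 * (8 * c_gamma \<gamma> * B^2)"
    if n: "n \<ge> 1" and F: "finite F" "F \<subseteq> {(x, y). x < y \<and> slow x y}" for n F
  proof -
    have "(real n)^2 = real n powr 2" using n by (simp add: powr_numeral)
    then have "(real n)^2 * real n powr (-1-\<beta>) = real n powr (2 + (-1-\<beta>))"
      by (simp only: powr_add)
    also have "2 + (-1-\<beta>) = 1-\<beta>" by simp
    finally have pow: "(real n)^2 * real n powr (-1-\<beta>) = real n powr (1-\<beta>)" .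
    have "Theta \<gamma> n * real n powr (-1-\<beta>) \<le> 2 * ((real n)^2 * real n powr (-1-\<beta>))"
      using mult_right_mono[OF Theta_le[OF n], of "real n powr (-1-\<beta>)" \<gamma>] by (simp add: mult.assoc)
    also have "\<dots> \<le> 2"
      unfolding pow using n assms(4) powr_le_one_of_nonpos[of "real n" "1-\<beta>"] by simp
    finally have "\<alpha> * (Theta \<gamma> n * real n powr (-1-\<beta>)) * sum (bond_energy \<gamma> n (glue Gm Gp)) F
        \<le> \<alpha> * 2 * (8 * c_gamma \<gamma> * B^2)"
      using assms(3) Theta_nonneg[of \<gamma> n]
      by (intro mult_mono sum_bond_energy_slow_le[OF assms(1,2) F] sum_nonneg bond_energy_nonneg) auto
    then show ?thesis by (simp add: mult_ac)
  qed
  then show ?thesis by (rule that)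
qed

lemma S_beta_gamma_schwartz:
  "S_beta_gamma \<alpha> \<beta> \<gamma> Gm Gp \<Longrightarrow> schwartz Gm \<and> schwartz Gp"
  unfolding S_beta_gamma_def S_Rob_def S_Neu_def by (auto split: if_splits)


lemma slow_bonds_bounded:
  assumes "\<gamma> \<ge> 2" "\<alpha> > 0" "\<beta> \<ge> 0" "S_beta_gamma \<alpha> \<beta> \<gamma> Gm Gp"
  obtains K where "\<And>n F. n \<ge> 1 \<Longrightarrow> finite F \<Longrightarrow> F \<subseteq> {(x, y). x < y \<and> slow x y} \<Longrightarrow>
    \<alpha> * Theta \<gamma> n * real n powr (-1-\<beta>) * sum (bond_energy \<gamma> n (glue Gm Gp)) F \<le> K"
proof (cases "\<beta> < 1")
  case True
  then have "schwartz (glue Gm Gp)" using assms(4) unfolding S_beta_gamma_def by simp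
  then show ?thesis by (rule slow_bonds_bounded_of_schwartz[OF _ assms(1-3) that])
next
  case False
  obtain Bm where Bm: "\<And>u. \<bar>Gm u\<bar> \<le> Bm"
    using schwartz_bounded S_beta_gamma_schwartz[OF assms(4)] by metis
  obtain Bp where Bp: "\<And>u. \<bar>Gp u\<bar> \<le> Bp"
    using schwartz_bounded S_beta_gamma_schwartz[OF assms(4)] by metis
  have "\<bar>glue Gm Gp u\<bar> \<le> Bm + Bp" for u
  proof -
    have "\<bar>Gm u\<bar> \<le> Bm + Bp" "\<bar>Gp u\<bar> \<le> Bm + Bp"
      using Bm[of u] Bp[of u] abs_ge_zero[of "Gm u"] abs_ge_zero[of "Gp u"] by linarith+
    then show ?thesis by (simp add: glue_def)
  qed
  moreover have "\<beta> \<ge> 1" using False by simp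
  ultimately show ?thesis by (rule slow_bonds_bounded_of_bounded[OF _ assms(1,2) _ that])
qed

lemma abs_set_integral_Icc_le:
  fixes f :: "real \<Rightarrow> real"
  assumes "\<And>s. \<bar>f s\<bar> \<le> K" "0 \<le> t"
  shows "\<bar>set_lebesgue_integral lborel {0..t} f\<bar> \<le> K * t"
proof -
  have "integrable lborel (\<lambda>s. K * indicator {0..t} s)"
    by (intro integrable_mult_right integrable_real_indicator) (auto simp: emeasure_lborel_Icc_eq)
  then have "(\<integral>s. \<bar>indicator {0..t} s * f s\<bar> \<partial>lborel) \<le> (\<integral>s. K * indicator {0..t} s \<partial>lborel)"
    using assms(1) order_trans[OF abs_ge_zero assms(1)]
    by (intro integral_mono') (auto simp: indicator_def abs_mult)
  then show ?thesis
    unfolding set_lebesgue_integral_def using assms(2)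
    by (intro order_trans[OF integral_abs_bound]) simp
qed

lemma abs_scaled_infsum_le:
  fixes f g :: "'a \<Rightarrow> real"
  assumes "\<And>p. p \<in> A \<Longrightarrow> 0 \<le> f p" "\<And>p. p \<in> A \<Longrightarrow> f p \<le> g p" "0 \<le> a"
    and "\<And>F. finite F \<Longrightarrow> F \<subseteq> A \<Longrightarrow> a * sum g F \<le> B"
  shows "\<bar>a * infsum f A\<bar> \<le> B"
proof -
  have B: "0 \<le> B" using assms(4)[of "{}"] by simp
  have "a * infsum f A \<le> B"
  proof (cases "f summable_on A \<and> a \<noteq> 0")
    case True
    then have a: "0 < a" using assms(3) by simp
    have "infsum f A \<le> B / a"
    proof (rule infsum_le_finite_sums)
      show "f summable_on A" using True by simp
      fix F assume F: "finite F" "F \<subseteq> A"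
      then have "a * sum f F \<le> a * sum g F"
        using assms(2,3) by (intro mult_left_mono sum_mono) auto
      then have "a * sum f F \<le> B" using assms(4)[OF F] by linarith
      then show "sum f F \<le> B / a" using a by (simp add: pos_le_divide_eq mult.commute)
    qed
    then show ?thesis using a by (simp add: field_simps)
  qed (use B in \<open>auto simp: infsum_not_exists\<close>)
  moreover have "0 \<le> a * infsum f A" using assms(1,3) by (simp add: infsum_nonneg)
  ultimately show ?thesis by simp
qed

lemma (in prob_space) abs_integral_le_const:
  fixes f :: "'a \<Rightarrow> real"
  assumes "\<And>x. x \<in> space M \<Longrightarrow> \<bar>f x\<bar> \<le> K"
  shows "\<bar>integral\<^sup>L M f\<bar> \<le> K"
proof (cases "integrable M f")
  case True
  have upper: "f x \<le> K" and lower: "-K \<le> f x" if "x \<in> space M" for x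
    using assms[OF that] by (simp_all add: abs_le_iff)
  have "expectation f \<le> K" by (rule integral_le_const[OF True AE_I2[OF upper]])
  moreover have "-K \<le> expectation f" by (rule integral_ge_const[OF True AE_I2[OF lower]])
  ultimately show ?thesis by simp
next
  case False
  obtain x where "x \<in> space M" using not_empty by blast
  then have "0 \<le> K" using assms[of x] by simp
  then show ?thesis using False by (simp add: not_integrable_integral_eq)
qed

lemma (in prob_space) variance_le_of_abs_le:
  fixes f :: "'a \<Rightarrow> real"
  assumes "\<And>x. x \<in> space M \<Longrightarrow> \<bar>f x\<bar> \<le> K"
  shows "variance f \<le> 4 * K^2"
proof -
  have "\<bar>(f x - expectation f)^2\<bar> \<le> 4 * K^2" if x: "x \<in> space M" for x
  proof -
    have "\<bar>expectation f\<bar> \<le> K" using assms by (rule abs_integral_le_const)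
    then have "\<bar>f x - expectation f\<bar> \<le> 2 * K" using assms[OF x] by linarith
    then have "\<bar>f x - expectation f\<bar>^2 \<le> (2 * K)^2" by (intro power_mono) auto
    then show ?thesis by (simp add: power_mult_distrib)
  qed
  then show ?thesis using abs_integral_le_const[of "\<lambda>x. (f x - expectation f)^2"] by simp
qed

lemma occupation_difference_sq_le_one: "(of_bool a - of_bool b :: real)^2 \<le> 1"
  by (cases a; cases b) auto

lemma abs_qv_le_linear:
  assumes "\<gamma> \<ge> 2" "\<alpha> > 0" "\<beta> \<ge> 0" "S_beta_gamma \<alpha> \<beta> \<gamma> Gm Gp"
  obtains K where "\<And>n \<eta> t. n \<ge> 1 \<Longrightarrow> 0 \<le> t \<Longrightarrow> \<bar>qv \<alpha> \<beta> \<gamma> n (glue Gm Gp) \<eta> t\<bar> \<le> K * t"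
proof -
  obtain K\<^sub>f where K\<^sub>f: "\<And>n F. n \<ge> 1 \<Longrightarrow> finite F \<Longrightarrow> F \<subseteq> {(x, y). x < y \<and> \<not> slow x y} \<Longrightarrow>
      Theta \<gamma> n / real n * sum (bond_energy \<gamma> n (glue Gm Gp)) F \<le> K\<^sub>f"
    using S_beta_gamma_schwartz[OF assms(4)] fast_bonds_bounded[OF _ _ assms(1)] by blast
  obtain K\<^sub>s where K\<^sub>s: "\<And>n F. n \<ge> 1 \<Longrightarrow> finite F \<Longrightarrow> F \<subseteq> {(x, y). x < y \<and> slow x y} \<Longrightarrow>
      \<alpha> * Theta \<gamma> n * real n powr (-1-\<beta>) * sum (bond_energy \<gamma> n (glue Gm Gp)) F \<le> K\<^sub>s"
    using slow_bonds_bounded[OF assms] by blast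
  have "\<bar>qv \<alpha> \<beta> \<gamma> n (glue Gm Gp) \<eta> t\<bar> \<le> (K\<^sub>f + K\<^sub>s) * t" if n: "n \<ge> 1" and t: "0 \<le> t" for n \<eta> t
  proof -
    define w where "w s = (\<lambda>(x, y). bond_energy \<gamma> n (glue Gm Gp) (x, y) * (of_bool (\<eta> s y) - of_bool (\<eta> s x))^2)"
      for s
    have w: "0 \<le> w s p" "w s p \<le> bond_energy \<gamma> n (glue Gm Gp) p" for s p
    proof -
      obtain x y where p: "p = (x, y)" by (cases p)
      show "0 \<le> w s p" "w s p \<le> bond_energy \<gamma> n (glue Gm Gp) p"
        unfolding w_def p using bond_energy_nonneg[of \<gamma> n "glue Gm Gp" "(x, y)"]
          occupation_difference_sq_le_one[of "\<eta> s y" "\<eta> s x"]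
        by (simp_all add: mult_left_le)
    qed
    have qv: "qv \<alpha> \<beta> \<gamma> n (glue Gm Gp) \<eta> t =
        set_lebesgue_integral lborel {0..t} (\<lambda>s. Theta \<gamma> n / real n * infsum (w s) {(x, y). x < y \<and> \<not> slow x y})
      + set_lebesgue_integral lborel {0..t} (\<lambda>s. \<alpha> * Theta \<gamma> n * real n powr (-1-\<beta>) * infsum (w s) {(x, y). x < y \<and> slow x y})"
      unfolding qv_def w_def bond_energy_def by (simp add: case_prod_unfold)
    have "\<bar>Theta \<gamma> n / real n * infsum (w s) {(x, y). x < y \<and> \<not> slow x y}\<bar> \<le> K\<^sub>f" for s
      by (rule abs_scaled_infsum_le[where g = "bond_energy \<gamma> n (glue Gm Gp)"],
          rule w, rule w, simp add: Theta_nonneg, rule K\<^sub>f[OF n])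
    then have fast: "\<bar>set_lebesgue_integral lborel {0..t} (\<lambda>s. Theta \<gamma> n / real n * infsum (w s) {(x, y). x < y \<and> \<not> slow x y})\<bar>
        \<le> K\<^sub>f * t"
      using t by (rule abs_set_integral_Icc_le)
    have "\<bar>\<alpha> * Theta \<gamma> n * real n powr (-1-\<beta>) * infsum (w s) {(x, y). x < y \<and> slow x y}\<bar> \<le> K\<^sub>s" for s
      by (rule abs_scaled_infsum_le[where g = "bond_energy \<gamma> n (glue Gm Gp)"],
          rule w, rule w, simp add: Theta_nonneg assms(2) less_imp_le, rule K\<^sub>s[OF n])
    then have slow: "\<bar>set_lebesgue_integral lborel {0..t} (\<lambda>s. \<alpha> * Theta \<gamma> n * real n powr (-1-\<beta>) * infsum (w s) {(x, y). x < y \<and> slow x y})\<bar>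
        \<le> K\<^sub>s * t"
      using t by (rule abs_set_integral_Icc_le)
    have "\<bar>qv \<alpha> \<beta> \<gamma> n (glue Gm Gp) \<eta> t\<bar> \<le> K\<^sub>f * t + K\<^sub>s * t"
      unfolding qv by (rule order_trans[OF abs_triangle_ineq add_mono[OF fast slow]])
    then show ?thesis by (simp add: distrib_right)
  qed
  then show ?thesis by (rule that)
qed

theorem lemma3p7:
  fixes \<alpha> \<beta> \<gamma> b T :: real and Gm Gp :: "real \<Rightarrow> real"
  assumes "\<gamma> \<ge> 2" and "\<alpha> > 0" and "\<beta> \<ge> 0" and "0 < b" and "b < 1" and "T > 0"
    and "S_beta_gamma \<alpha> \<beta> \<gamma> Gm Gp"
  shows "\<exists>C>0. \<forall>n::nat. n \<ge> 1 \<longrightarrow>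
           (\<forall>(M :: 'w measure) X. exclusion_process \<alpha> \<beta> \<gamma> b n M X \<longrightarrow>
              (\<forall>t\<in>{0..T}.
                 integral\<^sup>L M (\<lambda>\<omega>.
                   (qv \<alpha> \<beta> \<gamma> n (glue Gm Gp) (\<lambda>s. X \<omega> (s * Theta \<gamma> n)) t
                    - integral\<^sup>L M (\<lambda>\<omega>'. qv \<alpha> \<beta> \<gamma> n (glue Gm Gp) (\<lambda>s. X \<omega>' (s * Theta \<gamma> n)) t))^2)
                 \<le> C))"
proof -
  obtain K where K: "\<And>n \<eta> t. n \<ge> 1 \<Longrightarrow> 0 \<le> t \<Longrightarrow> \<bar>qv \<alpha> \<beta> \<gamma> n (glue Gm Gp) \<eta> t\<bar> \<le> K * t"
    using abs_qv_le_linear[OF assms(1-3,7)] by metis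
  show ?thesis
  proof (intro exI[of _ "4 * (\<bar>K\<bar> * T)^2 + 1"] conjI allI impI ballI)
    fix n :: nat and M :: "'w measure" and X t
    assume n: "n \<ge> 1" and "exclusion_process \<alpha> \<beta> \<gamma> b n M X" and t: "t \<in> {0..T}"
    then interpret prob_space M unfolding exclusion_process_def by blast
    have "\<bar>qv \<alpha> \<beta> \<gamma> n (glue Gm Gp) \<eta> t\<bar> \<le> \<bar>K\<bar> * T" for \<eta>
    proof -
      have "K * t \<le> \<bar>K\<bar> * T" using t by (intro mult_mono) auto
      then show ?thesis using K[OF n, of t \<eta>] t by simp
    qed
    then have "variance (\<lambda>\<omega>. qv \<alpha> \<beta> \<gamma> n (glue Gm Gp) (\<lambda>s. X \<omega> (s * Theta \<gamma> n)) t) \<le> 4 * (\<bar>K\<bar> * T)^2"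
      by (intro variance_le_of_abs_le)
    then show "variance (\<lambda>\<omega>. qv \<alpha> \<beta> \<gamma> n (glue Gm Gp) (\<lambda>s. X \<omega> (s * Theta \<gamma> n)) t) \<le> 4 * (\<bar>K\<bar> * T)^2 + 1"
      by simp
  qed (simp add: add_nonneg_pos)
qed

end
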